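(* Assume fractional Poisson claim arrivals with parameters $\lambda>0$, $0<\alpha\le1$, no discounting ($\delta=0$), and Pareto delays with survival function $\overline W(x)=\big(\frac{\theta}{\theta+x}\big)^\eta$, $x\ge0$, $\theta,\eta>0$. Then for $t>0$, $$\mathbb{E}[Z(t)]=\frac{\mu_1\lambda\theta^\eta}{\Gamma(\alpha)(\theta+t)^{\eta-\alpha}}\int_0^{\frac{t}{\theta+t}}(1-y)^{-\eta}y^{\alpha-1}\,\mathrm{d}y,$$ and as $t\to\infty$, $$\mathbb{E}[Z(t)]\sim\begin{cases}\dfrac{\mu_1\lambda\theta^\eta\Gamma(1-\eta)}{\Gamma(\alpha+1-\eta)}t^{\alpha-\eta}, & 0<\eta<1,\\[2mm] \dfrac{\mu_1\lambda\theta}{\Gamma(\alpha)}t^{\alpha-1}\ln t, & \eta=1,\\[2mm] \dfrac{\mu_1\lambda\theta}{(\eta-1)\Gamma(\alpha)}t^{\alpha-1}, & \eta>1.\end{cases}$$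
   Context: Claims arrive according to the fractional Poisson process with parameters $\lambda>0$, $0<\alpha\le1$: the renewal process with arrival times $T_1<T_2<\dots$ whose renewal function is $m(t)=\lambda t^\alpha/\Gamma(1+\alpha)$. Claim amounts $X_i$ are i.i.d. with $\mu_k:=\mathbb{E}[X^k]$; delays $L_i$ are i.i.d.; arrivals, amounts, delays mutually independent. $Z(t):=\sum_{i\ge1}\mathbf{1}_{\{T_i\le t<T_i+L_i\}}X_i$. $\sim$ means the ratio tends to 1. *)

theory Defs
  imports "HOL-Probability.Probability"
begin

text \<open>Arrival times of a renewal process with interarrival times tau 0, tau 1, ...:
  the (i+1)-th arrival time is tau 0 + ... + tau i (indices start at 0).\<close>
definition arrival_time :: "(nat \<Rightarrow> 'a \<Rightarrow> real) \<Rightarrow> nat \<Rightarrow> 'a \<Rightarrow> real" where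
  "arrival_time tau i \<omega> = (\<Sum>k\<le>i. tau k \<omega>)"

definition renewal_process :: "'a measure \<Rightarrow> (nat \<Rightarrow> 'a \<Rightarrow> real) \<Rightarrow> bool" where
  "renewal_process M tau \<longleftrightarrow>
     prob_space M \<and>
     prob_space.indep_vars M (\<lambda>_. borel) tau UNIV \<and>
     (\<forall>i. distr M borel (tau i) = distr M borel (tau 0)) \<and>
     (\<forall>i. AE \<omega> in M. tau i \<omega> > 0)"

text \<open>Renewal function m(t) = E[N(t)] = sum_i P(T_i <= t).\<close>
definition renewal_function :: "'a measure \<Rightarrow> (nat \<Rightarrow> 'a \<Rightarrow> real) \<Rightarrow> real \<Rightarrow> ennreal" where
  "renewal_function M tau t = (\<Sum>i. emeasure M {\<omega> \<in> space M. arrival_time tau i \<omega> \<le> t})"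

definition fractional_poisson :: "'a measure \<Rightarrow> real \<Rightarrow> real \<Rightarrow> (nat \<Rightarrow> 'a \<Rightarrow> real) \<Rightarrow> bool" where
  "fractional_poisson M lam alpha tau \<longleftrightarrow>
     renewal_process M tau \<and>
     (\<forall>t\<ge>0. renewal_function M tau t = ennreal (lam * t powr alpha / Gamma (1 + alpha)))"

definition Zproc :: "(nat \<Rightarrow> 'a \<Rightarrow> real) \<Rightarrow> (nat \<Rightarrow> 'a \<Rightarrow> real) \<Rightarrow> (nat \<Rightarrow> 'a \<Rightarrow> real)
                      \<Rightarrow> real \<Rightarrow> 'a \<Rightarrow> real" where
  "Zproc tau X L t \<omega> = (\<Sum>i. (if arrival_time tau i \<omega> \<le> t \<and> t < arrival_time tau i \<omega> + L i \<omega>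
                               then X i \<omega> else 0))"

end

theory Submission
  imports Defs "HOL-Real_Asymp.Real_Asymp"
begin

text \<open>Each claim amount is independent of its arrival time and delay, so
  \<open>E Z(t) = \<mu>\<^sub>1 \<Sum>\<^sub>i P(T\<^sub>i \<le> t < T\<^sub>i + L\<^sub>i)\<close>. Conditioning on \<open>T\<^sub>i\<close> writes each probability as the
  integral of the delay tail \<open>W(t - s)\<close> against the law of \<open>T\<^sub>i\<close>; summed over \<open>i\<close>, this is the
  integral against the renewal measure, which for the fractional Poisson process has the density
  \<open>\<lambda> s\<^sup>\<alpha>\<^sup>-\<^sup>1 / \<Gamma>(\<alpha>)\<close> on \<open>[0, \<infinity>)\<close> because both have the distribution function \<open>m\<close>. For Pareto
  delays the substitution \<open>s = (\<theta> + t) y\<close> turns it into \<open>\<theta>\<^sup>\<eta> (\<theta> + t)\<^sup>\<alpha>\<^sup>-\<^sup>\<eta>\<close> times the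
  incomplete Beta integral \<open>B(t / (\<theta> + t); \<alpha>, 1 - \<eta>)\<close>. Its upper limit tends to 1 as \<open>t \<rightarrow> \<infinity>\<close>:
  for \<open>\<eta> < 1\<close> it converges to \<open>B(\<alpha>, 1 - \<eta>)\<close>; otherwise, by l'Hopital's rule, it grows like a
  primitive of the singular factor \<open>(1 - y)\<^sup>-\<^sup>\<eta>\<close>, i.e. like \<open>-ln (1 - u)\<close> or
  \<open>(1 - u)\<^sup>1\<^sup>-\<^sup>\<eta> / (\<eta> - 1)\<close>.\<close>

section \<open>The incomplete Beta function\<close>

definition incomplete_Beta :: "real \<Rightarrow> real \<Rightarrow> real \<Rightarrow> real" where
  "incomplete_Beta a b u = integral {0..u} (\<lambda>y. y powr (a - 1) * (1 - y) powr (b - 1))"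

lemma nn_integral_powr_atLeastAtMost:
  fixes a c :: real
  assumes "a > 0" "c \<ge> 0"
  shows "(\<integral>\<^sup>+s. indicator {0..c} s * ennreal (s powr (a - 1)) \<partial>lborel) = ennreal (c powr a / a)"
proof -
  have "((\<lambda>s. s powr (a - 1)) has_integral c powr a / a) {0..c}"
    using has_integral_powr_from_0[of "a - 1" c] assms by simp
  then have "(\<integral>\<^sup>+s. ennreal (s powr (a - 1)) * indicator {0..c} s \<partial>lborel) = ennreal (c powr a / a)"
    by (rule nn_integral_has_integral_lebesgue'[rotated]) auto
  then show ?thesis
    by (simp add: mult.commute)
qed

lemma set_integrable_Beta_integrand:
  fixes a b u :: real
  assumes "a > 0" "u < 1"
  shows "set_integrable lborel {0..u} (\<lambda>y. y powr (a - 1) * (1 - y) powr (b - 1))"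
proof -
  have cont: "continuous_on {0..u} (\<lambda>y. (1 - y) powr (b - 1))"
    using assms by (intro continuous_intros) auto
  have "(\<lambda>y. y powr (a - 1)) absolutely_integrable_on {0..u}"
  proof (cases "u \<ge> 0")
    case True
    then show ?thesis
      using assms by (intro nonnegative_absolutely_integrable_1 integrable_on_powr_from_0) auto
  qed simp
  then have "(\<lambda>y. (1 - y) powr (b - 1) * y powr (a - 1)) absolutely_integrable_on {0..u}"
    using cont
    by (intro absolutely_integrable_bounded_measurable_product_real
          continuous_imp_measurable_on_sets_lebesgue compact_imp_bounded compact_continuous_image)
       auto
  then show ?thesis
    unfolding set_integrable_def
    by (subst (asm) integrable_completion) (auto simp: mult.commute)
qed

lemma interval_integral_Beta_integrand:
  fixes a b u :: real
  assumes "a > 0" "0 \<le> u" "u < 1"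
  shows "(LBINT y=0..u. y powr (a - 1) * (1 - y) powr (b - 1)) = incomplete_Beta a b u"
  using interval_integral_eq_integral[OF assms(2) set_integrable_Beta_integrand[OF assms(1,3)]]
  by (simp add: incomplete_Beta_def zero_ereal_def)

lemma nn_integral_Beta_integrand:
  fixes a b u :: real
  assumes "a > 0" "u < 1"
  shows "(\<integral>\<^sup>+y. ennreal (indicator {0..u} y * (y powr (a - 1) * (1 - y) powr (b - 1))) \<partial>lborel)
       = ennreal (incomplete_Beta a b u)"
  using set_borel_integral_eq_integral(1)[OF set_integrable_Beta_integrand[OF assms]]
  unfolding incomplete_Beta_def
  by (intro nn_integral_has_integral_lebesgue integrable_integral) auto

lemma incomplete_Beta_nonneg:
  fixes a b u :: real
  assumes "a > 0" "u < 1"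
  shows "incomplete_Beta a b u \<ge> 0"
  unfolding incomplete_Beta_def
  using set_borel_integral_eq_integral(1)[OF set_integrable_Beta_integrand[OF assms]]
  by (rule integral_nonneg) simp

lemma has_real_derivative_incomplete_Beta:
  fixes a b u :: real
  assumes "a > 0" "0 < u" "u < 1"
  shows "(incomplete_Beta a b has_real_derivative u powr (a - 1) * (1 - u) powr (b - 1)) (at u)"
proof -
  let ?f = "\<lambda>y. y powr (a - 1) * (1 - y) powr (b - 1)"
  define c d where "c = u / 2" and "d = (u + 1) / 2"
  have cd: "0 < c" "c < u" "u < d" "d < 1"
    using assms by (auto simp: c_def d_def)
  have "((\<lambda>x. integral {c..x} ?f) has_real_derivative ?f u) (at u within {c..d})"
    using cd by (intro integral_has_real_derivative continuous_intros) auto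
  then have "((\<lambda>x. incomplete_Beta a b c + integral {c..x} ?f) has_real_derivative ?f u) (at u)"
    using cd by (auto simp: at_within_Icc_at intro!: derivative_eq_intros)
  then show ?thesis
  proof (rule has_field_derivative_transform_within_open[where S = "{c<..<d}"])
    fix x assume x: "x \<in> {c<..<d}"
    have "?f integrable_on {0..x}"
      using x cd assms by (intro set_borel_integral_eq_integral(1) set_integrable_Beta_integrand) auto
    then show "incomplete_Beta a b c + integral {c..x} ?f = incomplete_Beta a b x"
      unfolding incomplete_Beta_def using x cd
      by (intro Henstock_Kurzweil_Integration.integral_combine) auto
  qed (use cd in auto)
qed

lemma incomplete_Beta_tendsto_Beta:
  fixes a b :: real
  assumes "a > 0" "b > 0"
  shows "(incomplete_Beta a b \<longlongrightarrow> Beta a b) (at_left 1)"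
proof -
  have "continuous_on {0..1} (incomplete_Beta a b)"
    unfolding incomplete_Beta_def
    by (rule indefinite_integral_continuous_1) (use integrable_Beta' assms in auto)
  then have "(incomplete_Beta a b \<longlongrightarrow> incomplete_Beta a b 1) (at 1 within {0..1})"
    by (simp add: continuous_on_def)
  then have "(incomplete_Beta a b \<longlongrightarrow> incomplete_Beta a b 1) (at_left 1)"
    by (simp add: at_within_Icc_at_left)
  moreover have "incomplete_Beta a b 1 = Beta a b"
    unfolding incomplete_Beta_def using assms by (intro integral_unique has_integral_Beta_real)
  ultimately show ?thesis
    by simp
qed

text \<open>For \<open>b \<le> 0\<close> the integral diverges at 1; by l'Hopital it is asymptotic to any primitive
  of the singular factor \<open>(1 - u) powr (b - 1)\<close>, since the regular factor tends to 1.\<close>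
lemma incomplete_Beta_asymp_equiv_at_left_1:
  fixes a b :: real and g :: "real \<Rightarrow> real"
  assumes "a > 0" and g_lim: "LIM u at_left 1. g u :> at_top"
    and g_deriv: "\<And>u. 0 < u \<Longrightarrow> u < 1 \<Longrightarrow> (g has_real_derivative (1 - u) powr (b - 1)) (at u)"
  shows "incomplete_Beta a b \<sim>[at_left 1] g"
proof (rule asymp_equivI')
  have near_1: "\<forall>\<^sub>F u in at_left 1. u \<in> {0<..<1::real}"
    by (rule eventually_at_left_real) simp
  have "((\<lambda>u. u powr (a - 1)) \<longlongrightarrow> 1 powr (a - 1)) (at_left 1)"
    by (intro tendsto_intros) auto
  then have "((\<lambda>u. u powr (a - 1)) \<longlongrightarrow> 1) (at_left 1)"
    by simp
  then have ratio:
      "((\<lambda>u. u powr (a - 1) * (1 - u) powr (b - 1) / (1 - u) powr (b - 1)) \<longlongrightarrow> 1) (at_left 1)"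
    by (rule Lim_transform_eventually) (use near_1 in \<open>auto elim!: eventually_mono\<close>)
  show "((\<lambda>u. incomplete_Beta a b u / g u) \<longlongrightarrow> 1) (at_left 1)"
  proof (rule lhopital_left_at_top[OF g_lim _ _ _ ratio])
    show "\<forall>\<^sub>F u in at_left 1. (1 - u) powr (b - 1) \<noteq> 0"
      using near_1 by eventually_elim auto
    show "\<forall>\<^sub>F u in at_left 1.
        (incomplete_Beta a b has_real_derivative u powr (a - 1) * (1 - u) powr (b - 1)) (at u)"
      using near_1 by eventually_elim (use assms in \<open>auto intro!: has_real_derivative_incomplete_Beta\<close>)
    show "\<forall>\<^sub>F u in at_left 1. (g has_real_derivative (1 - u) powr (b - 1)) (at u)"
      using near_1 by eventually_elim (auto intro!: g_deriv)
  qed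
qed

lemma incomplete_Beta_asymp_equiv_ln:
  fixes a :: real
  assumes "a > 0"
  shows "incomplete_Beta a 0 \<sim>[at_left 1] (\<lambda>u. - ln (1 - u))"
proof (rule incomplete_Beta_asymp_equiv_at_left_1[OF assms])
  have "filterlim (\<lambda>u. 1 - u) (at_right 0) (at_left (1::real))"
    by real_asymp
  from filterlim_compose[OF ln_at_0 this] have "LIM u at_left 1. ln (1 - u :: real) :> at_bot"
    by (simp add: filterlim_def)
  then show "LIM u at_left 1. - ln (1 - u :: real) :> at_top"
    by (rule filterlim_uminus_at_bot[THEN iffD1])
  fix u :: real assume "0 < u" "u < 1"
  then have "((\<lambda>u. - ln (1 - u)) has_real_derivative - (- 1 / (1 - u))) (at u)"
    by (auto intro!: derivative_eq_intros)
  then show "((\<lambda>u. - ln (1 - u)) has_real_derivative (1 - u) powr (0 - 1)) (at u)"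
    using \<open>u < 1\<close> by (simp add: powr_minus divide_simps)
qed

lemma incomplete_Beta_asymp_equiv_powr:
  fixes a b :: real
  assumes "a > 0" "b < 0"
  shows "incomplete_Beta a b \<sim>[at_left 1] (\<lambda>u. (1 - u) powr b / - b)"
proof (rule incomplete_Beta_asymp_equiv_at_left_1[OF assms(1)])
  show "LIM u at_left 1. (1 - u) powr b / - b :> at_top"
    using assms(2) by real_asymp
  fix u :: real assume "0 < u" "u < 1"
  then have "((\<lambda>u. (1 - u) powr b / - b) has_real_derivative
      b * (1 - u) powr (b - 1) * (- 1) / - b) (at u)"
    by (auto intro!: derivative_eq_intros)
  then show "((\<lambda>u. (1 - u) powr b / - b) has_real_derivative (1 - u) powr (b - 1)) (at u)"
    using assms(2) by simp
qed

lemma filterlim_ratio_at_left_1: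
  fixes \<theta> :: real
  assumes "\<theta> > 0"
  shows "filterlim (\<lambda>t. t / (\<theta> + t)) (at_left 1) at_top"
  using assms by real_asymp

lemma incomplete_Beta_scaled_asymp_equiv_pos:
  fixes a b \<theta> :: real
  assumes "a > 0" "b > 0" "\<theta> > 0"
  shows "(\<lambda>t. (\<theta> + t) powr (a + b - 1) * incomplete_Beta a b (t / (\<theta> + t)))
           \<sim>[at_top] (\<lambda>t. t powr (a + b - 1) * Beta a b)"
proof (rule asymp_equiv_mult)
  show "(\<lambda>t. (\<theta> + t) powr (a + b - 1)) \<sim>[at_top] (\<lambda>t. t powr (a + b - 1))"
    using assms by real_asymp
  have "Beta a b > 0"
    using assms by (simp add: Beta_def)
  then have "incomplete_Beta a b \<sim>[at_left 1] (\<lambda>_. Beta a b)"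
    using assms by (intro tendsto_imp_asymp_equiv_const incomplete_Beta_tendsto_Beta) auto
  then show "(\<lambda>t. incomplete_Beta a b (t / (\<theta> + t))) \<sim>[at_top] (\<lambda>_. Beta a b)"
    using filterlim_ratio_at_left_1[OF assms(3)] by (rule asymp_equiv_compose')
qed

lemma incomplete_Beta_scaled_asymp_equiv_zero:
  fixes a \<theta> :: real
  assumes "a > 0" "\<theta> > 0"
  shows "(\<lambda>t. (\<theta> + t) powr (a - 1) * incomplete_Beta a 0 (t / (\<theta> + t)))
           \<sim>[at_top] (\<lambda>t. t powr (a - 1) * ln t)"
proof (rule asymp_equiv_mult)
  show "(\<lambda>t. (\<theta> + t) powr (a - 1)) \<sim>[at_top] (\<lambda>t. t powr (a - 1))"
    using assms by real_asymp
  have "(\<lambda>t. incomplete_Beta a 0 (t / (\<theta> + t))) \<sim>[at_top] (\<lambda>t. - ln (1 - t / (\<theta> + t)))"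
    using incomplete_Beta_asymp_equiv_ln[OF assms(1)] filterlim_ratio_at_left_1[OF assms(2)]
    by (rule asymp_equiv_compose')
  also have "(\<lambda>t. - ln (1 - t / (\<theta> + t))) \<sim>[at_top] ln"
    using assms by real_asymp
  finally show "(\<lambda>t. incomplete_Beta a 0 (t / (\<theta> + t))) \<sim>[at_top] ln" .
qed

lemma incomplete_Beta_scaled_asymp_equiv_neg:
  fixes a b \<theta> :: real
  assumes "a > 0" "b < 0" "\<theta> > 0"
  shows "(\<lambda>t. (\<theta> + t) powr (a + b - 1) * incomplete_Beta a b (t / (\<theta> + t)))
           \<sim>[at_top] (\<lambda>t. \<theta> powr b / - b * t powr (a - 1))"
proof -
  have "(\<lambda>t. incomplete_Beta a b (t / (\<theta> + t))) \<sim>[at_top] (\<lambda>t. (1 - t / (\<theta> + t)) powr b / - b)"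
    using incomplete_Beta_asymp_equiv_powr[OF assms(1,2)] filterlim_ratio_at_left_1[OF assms(3)]
    by (rule asymp_equiv_compose')
  then have "(\<lambda>t. (\<theta> + t) powr (a + b - 1) * incomplete_Beta a b (t / (\<theta> + t)))
      \<sim>[at_top] (\<lambda>t. (\<theta> + t) powr (a + b - 1) * ((1 - t / (\<theta> + t)) powr b / - b))"
    by (intro asymp_equiv_mult asymp_equiv_refl)
  also have "\<dots> \<sim>[at_top] (\<lambda>t. \<theta> powr b / - b * (\<theta> + t) powr (a - 1))"
  proof (rule asymp_equiv_refl_ev)
    show "\<forall>\<^sub>F t in at_top. (\<theta> + t) powr (a + b - 1) * ((1 - t / (\<theta> + t)) powr b / - b)
        = \<theta> powr b / - b * (\<theta> + t) powr (a - 1)"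
      using eventually_gt_at_top[of 0]
    proof eventually_elim
      case (elim t)
      then have "1 - t / (\<theta> + t) = \<theta> / (\<theta> + t)"
        and "(\<theta> + t) powr (a + b - 1) = (\<theta> + t) powr (a - 1) * (\<theta> + t) powr b"
        using assms by (simp_all add: field_simps flip: powr_add)
      then show ?case
        using elim assms by (simp add: powr_divide)
    qed
  qed
  also have "\<dots> \<sim>[at_top] (\<lambda>t. \<theta> powr b / - b * t powr (a - 1))"
    using assms by (intro asymp_equiv_mult asymp_equiv_refl) real_asymp
  finally show ?thesis .
qed

lemma asymp_equiv_fractional_Pareto:
  fixes c \<alpha> \<theta> \<eta> :: real
  assumes "\<alpha> > 0" "\<theta> > 0"
  defines "F \<equiv> \<lambda>t. c * \<theta> powr \<eta> / Gamma \<alpha> *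
             ((\<theta> + t) powr (\<alpha> - \<eta>) * incomplete_Beta \<alpha> (1 - \<eta>) (t / (\<theta> + t)))"
  shows "\<eta> < 1 \<Longrightarrow>
           F \<sim>[at_top] (\<lambda>t. c * \<theta> powr \<eta> * Gamma (1 - \<eta>) / Gamma (\<alpha> + 1 - \<eta>) * t powr (\<alpha> - \<eta>))"
    and "\<eta> = 1 \<Longrightarrow> F \<sim>[at_top] (\<lambda>t. c * \<theta> / Gamma \<alpha> * t powr (\<alpha> - 1) * ln t)"
    and "\<eta> > 1 \<Longrightarrow> F \<sim>[at_top] (\<lambda>t. c * \<theta> / ((\<eta> - 1) * Gamma \<alpha>) * t powr (\<alpha> - 1))"
proof -
  have asymp: "F \<sim>[at_top] H"
    if "(\<lambda>t. (\<theta> + t) powr (\<alpha> - \<eta>) * incomplete_Beta \<alpha> (1 - \<eta>) (t / (\<theta> + t))) \<sim>[at_top] G"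
      and "\<And>t. c * \<theta> powr \<eta> / Gamma \<alpha> * G t = H t" for G H
    using asymp_equiv_mult[OF asymp_equiv_refl[of "\<lambda>_. c * \<theta> powr \<eta> / Gamma \<alpha>"] that(1)]
    by (simp only: F_def that(2))
  show "F \<sim>[at_top] (\<lambda>t. c * \<theta> powr \<eta> * Gamma (1 - \<eta>) / Gamma (\<alpha> + 1 - \<eta>) * t powr (\<alpha> - \<eta>))"
    if "\<eta> < 1"
  proof (rule asymp)
    show "(\<lambda>t. (\<theta> + t) powr (\<alpha> - \<eta>) * incomplete_Beta \<alpha> (1 - \<eta>) (t / (\<theta> + t)))
        \<sim>[at_top] (\<lambda>t. t powr (\<alpha> - \<eta>) * Beta \<alpha> (1 - \<eta>))"
      using incomplete_Beta_scaled_asymp_equiv_pos[of \<alpha> "1 - \<eta>" \<theta>] assms(1,2) that by simp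
    show "c * \<theta> powr \<eta> / Gamma \<alpha> * (t powr (\<alpha> - \<eta>) * Beta \<alpha> (1 - \<eta>))
        = c * \<theta> powr \<eta> * Gamma (1 - \<eta>) / Gamma (\<alpha> + 1 - \<eta>) * t powr (\<alpha> - \<eta>)" for t
      using Gamma_real_pos[OF assms(1)] by (simp add: Beta_def add_diff_eq)
  qed
  show "F \<sim>[at_top] (\<lambda>t. c * \<theta> / Gamma \<alpha> * t powr (\<alpha> - 1) * ln t)" if "\<eta> = 1"
  proof (rule asymp)
    show "(\<lambda>t. (\<theta> + t) powr (\<alpha> - \<eta>) * incomplete_Beta \<alpha> (1 - \<eta>) (t / (\<theta> + t)))
        \<sim>[at_top] (\<lambda>t. t powr (\<alpha> - 1) * ln t)"
      using incomplete_Beta_scaled_asymp_equiv_zero[of \<alpha> \<theta>] assms(1,2) that by simp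
    show "c * \<theta> powr \<eta> / Gamma \<alpha> * (t powr (\<alpha> - 1) * ln t)
        = c * \<theta> / Gamma \<alpha> * t powr (\<alpha> - 1) * ln t" for t
      using assms(2) that by simp
  qed
  show "F \<sim>[at_top] (\<lambda>t. c * \<theta> / ((\<eta> - 1) * Gamma \<alpha>) * t powr (\<alpha> - 1))" if "\<eta> > 1"
  proof (rule asymp)
    show "(\<lambda>t. (\<theta> + t) powr (\<alpha> - \<eta>) * incomplete_Beta \<alpha> (1 - \<eta>) (t / (\<theta> + t)))
        \<sim>[at_top] (\<lambda>t. \<theta> powr (1 - \<eta>) / - (1 - \<eta>) * t powr (\<alpha> - 1))"
      using incomplete_Beta_scaled_asymp_equiv_neg[of \<alpha> "1 - \<eta>" \<theta>] assms(1,2) that by simp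
    have "\<theta> powr \<eta> * \<theta> powr (1 - \<eta>) = \<theta>"
      using assms(2) by (simp flip: powr_add)
    then show "c * \<theta> powr \<eta> / Gamma \<alpha> * (\<theta> powr (1 - \<eta>) / - (1 - \<eta>) * t powr (\<alpha> - 1))
        = c * \<theta> / ((\<eta> - 1) * Gamma \<alpha>) * t powr (\<alpha> - 1)" for t
      by (simp add: field_simps)
  qed
qed

lemma nn_integral_powr_Pareto_survival:
  fixes a \<eta> \<theta> t :: real
  assumes "a > 0" "\<theta> > 0" "t \<ge> 0"
  shows "(\<integral>\<^sup>+s. indicator {0..t} s * ennreal (s powr (a - 1) * (\<theta> / (\<theta> + (t - s))) powr \<eta>) \<partial>lborel)
       = ennreal (\<theta> powr \<eta> * (\<theta> + t) powr (a - \<eta>) * incomplete_Beta a (1 - \<eta>) (t / (\<theta> + t)))"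
proof -
  define c u K where "c = \<theta> + t" and "u = t / c" and "K = \<theta> powr \<eta> * c powr (a - \<eta>)"
  have c: "c > 0" and u: "u < 1" and K: "K \<ge> 0"
    using assms by (auto simp: c_def u_def K_def)
  have substitution: "c * ((c * y) powr (a - 1) * (\<theta> / (\<theta> + (t - c * y))) powr \<eta>)
      = K * (y powr (a - 1) * (1 - y) powr ((1 - \<eta>) - 1))" if y: "0 \<le> y" "y \<le> u" for y
  proof -
    have "y < 1"
      using y u by simp
    have "\<theta> + (t - c * y) = c * (1 - y)"
      by (simp add: c_def algebra_simps)
    then have e1: "(\<theta> / (\<theta> + (t - c * y))) powr \<eta> = \<theta> powr \<eta> / (c powr \<eta> * (1 - y) powr \<eta>)"
      using c \<open>y < 1\<close> assms(2) by (simp add: powr_divide powr_mult)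
    have e2: "(c * y) powr (a - 1) = c powr a / c * y powr (a - 1)"
      using c y by (simp add: powr_mult powr_diff)
    have e3: "K = \<theta> powr \<eta> * (c powr a / c powr \<eta>)"
      by (simp add: K_def powr_diff)
    have e4: "(1 - y) powr ((1 - \<eta>) - 1) = 1 / (1 - y) powr \<eta>"
      by (simp add: powr_minus divide_simps)
    have field_identity: "c * (A / c * B * (E / (C * D))) = E * (A / C) * (B * (1 / D))"
      if "C \<noteq> 0" "D \<noteq> 0" for A B C D E :: real
      using c that by (simp add: field_simps)
    show ?thesis
      unfolding e1 e2 e3 e4 by (rule field_identity) (use c \<open>y < 1\<close> in simp_all)
  qed
  define f where "f s = indicator {0..t} s * ennreal (s powr (a - 1) * (\<theta> / (\<theta> + (t - s))) powr \<eta>)" for s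
  have "(\<integral>\<^sup>+s. f s \<partial>lborel) = ennreal \<bar>c\<bar> * (\<integral>\<^sup>+y. f (0 + c * y) \<partial>lborel)"
    by (rule nn_integral_real_affine) (unfold f_def, measurable, use c in simp)
  also have "\<dots> = (\<integral>\<^sup>+y. ennreal \<bar>c\<bar> * f (0 + c * y) \<partial>lborel)"
    by (rule nn_integral_cmult[symmetric]) (unfold f_def, measurable)
  also have "\<dots> = (\<integral>\<^sup>+y. ennreal K *
      ennreal (indicator {0..u} y * (y powr (a - 1) * (1 - y) powr ((1 - \<eta>) - 1))) \<partial>lborel)"
  proof (intro nn_integral_cong)
    fix y
    have "c * y \<in> {0..t} \<longleftrightarrow> y \<in> {0..u}"
      using c by (auto simp: u_def zero_le_mult_iff pos_le_divide_eq mult.commute)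
    then show "ennreal \<bar>c\<bar> * f (0 + c * y)
        = ennreal K * ennreal (indicator {0..u} y * (y powr (a - 1) * (1 - y) powr ((1 - \<eta>) - 1)))"
      using substitution[of y] c K
      by (auto simp: f_def indicator_def ennreal_mult'[symmetric] ennreal_mult[symmetric])
  qed
  also have "\<dots> = ennreal K * ennreal (incomplete_Beta a (1 - \<eta>) u)"
    using nn_integral_Beta_integrand[OF assms(1) u, of "1 - \<eta>"] by (simp add: nn_integral_cmult)
  finally show ?thesis
    using K by (simp add: f_def K_def c_def u_def ennreal_mult')
qed

section \<open>The renewal measure of a fractional Poisson process\<close>

lemma real_measure_eqI_atMost:
  fixes M N :: "real measure"
  assumes "finite_measure M" "finite_measure N"
    and "sets M = sets borel" "sets N = sets borel"
    and "\<And>x. emeasure M {..x} = emeasure N {..x}"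
  shows "M = N"
proof (rule cdf_unique')
  interpret M: finite_measure M by fact
  interpret N: finite_measure N by fact
  show "finite_borel_measure M" "finite_borel_measure N"
    using assms by (auto intro!: finite_borel_measure.intro simp: finite_borel_measure_axioms_def)
  show "cdf M = cdf N"
    using assms(5) by (simp add: cdf_def fun_eq_iff M.emeasure_eq_measure N.emeasure_eq_measure)
qed

lemma borel_measurable_arrival_time [measurable]:
  assumes [measurable]: "\<And>i. tau i \<in> borel_measurable M"
  shows "arrival_time tau i \<in> borel_measurable M"
  unfolding arrival_time_def by measurable

text \<open>The renewal measure counts arrivals: its mass on a Borel set \<open>B\<close> is the expected
  number of arrival times in \<open>B\<close>.\<close>
definition renewal_measure :: "'a measure \<Rightarrow> (nat \<Rightarrow> 'a \<Rightarrow> real) \<Rightarrow> real measure" where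
  "renewal_measure M tau = distr (count_space UNIV \<Otimes>\<^sub>M M) borel (\<lambda>(i, \<omega>). arrival_time tau i \<omega>)"

lemma sets_renewal_measure [simp, measurable_cong]: "sets (renewal_measure M tau) = sets borel"
  by (simp add: renewal_measure_def)

lemma space_renewal_measure [simp]: "space (renewal_measure M tau) = UNIV"
  by (simp add: renewal_measure_def)

lemma nn_integral_renewal_measure:
  assumes "sigma_finite_measure M"
    and [measurable]: "\<And>i. tau i \<in> borel_measurable M" "g \<in> borel_measurable borel"
  shows "(\<integral>\<^sup>+s. g s \<partial>renewal_measure M tau) = (\<Sum>i. \<integral>\<^sup>+\<omega>. g (arrival_time tau i \<omega>) \<partial>M)"
proof -
  have [measurable]: "(\<lambda>(i, \<omega>). arrival_time tau i \<omega>) \<in> count_space UNIV \<Otimes>\<^sub>M M \<rightarrow>\<^sub>M borel"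
    by (rule measurable_pair_measure_countable1)
       (simp_all add: borel_measurable_arrival_time[OF assms(2)])
  have "(\<integral>\<^sup>+s. g s \<partial>renewal_measure M tau)
      = (\<integral>\<^sup>+p. g (case p of (i, \<omega>) \<Rightarrow> arrival_time tau i \<omega>) \<partial>(count_space UNIV \<Otimes>\<^sub>M M))"
    unfolding renewal_measure_def by (rule nn_integral_distr) auto
  also have "\<dots> = (\<integral>\<^sup>+i. \<integral>\<^sup>+\<omega>. g (arrival_time tau i \<omega>) \<partial>M \<partial>count_space UNIV)"
    by (subst sigma_finite_measure.nn_integral_fst[OF assms(1), symmetric])
       (auto simp: case_prod_beta)
  also have "\<dots> = (\<Sum>i. \<integral>\<^sup>+\<omega>. g (arrival_time tau i \<omega>) \<partial>M)"
    by (rule nn_integral_count_space_nat)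
  finally show ?thesis .
qed

lemma emeasure_renewal_measure_atMost:
  assumes "sigma_finite_measure M" "\<And>i. tau i \<in> borel_measurable M"
  shows "emeasure (renewal_measure M tau) {..t} = renewal_function M tau t"
proof -
  have [measurable]: "\<And>i. tau i \<in> borel_measurable M"
    by (fact assms(2))
  have "emeasure (renewal_measure M tau) {..t} = (\<integral>\<^sup>+s. indicator {..t} s \<partial>renewal_measure M tau)"
    by simp
  also have "\<dots> = (\<Sum>i. \<integral>\<^sup>+\<omega>. indicator {..t} (arrival_time tau i \<omega>) \<partial>M)"
    by (rule nn_integral_renewal_measure[OF assms(1)]) simp_all
  also have "\<dots> = (\<Sum>i. \<integral>\<^sup>+\<omega>. indicator {\<omega> \<in> space M. arrival_time tau i \<omega> \<le> t} \<omega> \<partial>M)"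
    by (intro suminf_cong nn_integral_cong) (simp split: split_indicator)
  also have "\<dots> = renewal_function M tau t"
    unfolding renewal_function_def by simp
  finally show ?thesis .
qed

lemma fractional_poisson_measurable:
  assumes "fractional_poisson M lam \<alpha> tau"
  shows "tau i \<in> borel_measurable M"
  using assms prob_space.indep_vars_def[of M "\<lambda>_. borel" tau UNIV]
  by (auto simp: fractional_poisson_def renewal_process_def)

lemma Gamma_one_plus_real:
  fixes \<alpha> :: real
  assumes "\<alpha> > 0"
  shows "Gamma (1 + \<alpha>) = \<alpha> * Gamma \<alpha>"
  using Gamma_plus1[of \<alpha>] assms by (simp add: add.commute nonpos_Ints_def)

lemma emeasure_fractional_density_atMost:
  fixes lam \<alpha> t x :: real
  assumes "lam \<ge> 0" "\<alpha> > 0" "t \<ge> 0"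
  shows "emeasure (density lborel (\<lambda>s. indicator {0..t} s * ennreal (lam / Gamma \<alpha> * s powr (\<alpha> - 1)))) {..x}
       = ennreal (if x < 0 then 0 else lam * min x t powr \<alpha> / Gamma (1 + \<alpha>))"
proof -
  have density_split: "ennreal (lam / Gamma \<alpha> * s powr (\<alpha> - 1))
      = ennreal (lam / Gamma \<alpha>) * ennreal (s powr (\<alpha> - 1))" for s
    using assms by (intro ennreal_mult') simp
  have "emeasure (density lborel (\<lambda>s. indicator {0..t} s * ennreal (lam / Gamma \<alpha> * s powr (\<alpha> - 1)))) {..x}
      = (\<integral>\<^sup>+s. ennreal (lam / Gamma \<alpha>) * (indicator {0..min x t} s * ennreal (s powr (\<alpha> - 1))) \<partial>lborel)"
    unfolding density_split
    by (subst emeasure_density) (auto intro!: nn_integral_cong split: split_indicator)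
  also have "\<dots> = ennreal (if x < 0 then 0 else lam * min x t powr \<alpha> / Gamma (1 + \<alpha>))"
    using assms
    by (auto simp: nn_integral_cmult nn_integral_powr_atLeastAtMost Gamma_one_plus_real
          ennreal_mult'[symmetric])
  finally show ?thesis .
qed

lemma density_renewal_measure_fractional_poisson:
  assumes fp: "fractional_poisson M lam \<alpha> tau" and "lam \<ge> 0" "\<alpha> > 0" "t \<ge> 0"
  shows "density (renewal_measure M tau) (indicator {..t})
       = density lborel (\<lambda>s. indicator {0..t} s * ennreal (lam / Gamma \<alpha> * s powr (\<alpha> - 1)))"
    (is "?N = ?D")
proof (rule real_measure_eqI_atMost)
  have "sigma_finite_measure M" "\<And>i. tau i \<in> borel_measurable M"
    using fp by (auto simp: fractional_poisson_def renewal_process_def prob_space_imp_sigma_finite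
        intro: fractional_poisson_measurable)
  then have renewal: "emeasure (renewal_measure M tau) {..x} = ennreal (lam * x powr \<alpha> / Gamma (1 + \<alpha>))"
    if "x \<ge> 0" for x
    using fp that by (simp add: emeasure_renewal_measure_atMost fractional_poisson_def)
  have N: "emeasure ?N {..x} = ennreal (if x < 0 then 0 else lam * min x t powr \<alpha> / Gamma (1 + \<alpha>))" for x
  proof -
    have "(\<lambda>s. indicator {..t} s * indicator {..x} s :: ennreal) = indicator {..min x t}"
      by (auto simp: fun_eq_iff split: split_indicator)
    then have "emeasure ?N {..x} = emeasure (renewal_measure M tau) {..min x t}"
      by (simp add: emeasure_density)
    also have "\<dots> = ennreal (if x < 0 then 0 else lam * min x t powr \<alpha> / Gamma (1 + \<alpha>))"
    proof (cases "x < 0")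
      case True
      then have "emeasure (renewal_measure M tau) {..min x t} \<le> emeasure (renewal_measure M tau) {..0}"
        by (intro emeasure_mono) auto
      also have "\<dots> = 0"
        using renewal[of 0] assms by simp
      finally show ?thesis
        using True by simp
    qed (use renewal assms in simp)
    finally show ?thesis .
  qed
  have D: "emeasure ?D {..x} = ennreal (if x < 0 then 0 else lam * min x t powr \<alpha> / Gamma (1 + \<alpha>))" for x
    using assms(2-4) by (rule emeasure_fractional_density_atMost)
  show "emeasure ?N {..x} = emeasure ?D {..x}" for x
    by (simp only: N D)
  have "emeasure ?N (space ?N) = emeasure (renewal_measure M tau) {..t}"
    by (simp add: emeasure_density)
  then show "finite_measure ?N"
    using renewal[of t] assms(4) by (intro finite_measureI) simp
  have "emeasure ?D (space ?D) = emeasure ?D {..t}"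
    by (subst (1 2) emeasure_density) (auto intro!: nn_integral_cong split: split_indicator)
  then show "finite_measure ?D"
    using D[of t] by (intro finite_measureI) simp
qed simp_all

section \<open>Claims with independent amounts and delays\<close>

lemma (in prob_space) indep_var_disjoint_blocks:
  fixes V :: "'i \<Rightarrow> 'a \<Rightarrow> real"
    and Y1 :: "('i \<Rightarrow> real) \<Rightarrow> 'b::topological_space" and Y2 :: "('i \<Rightarrow> real) \<Rightarrow> 'b"
  assumes "indep_vars (\<lambda>_. borel) V I" "K1 \<inter> K2 = {}" "K1 \<subseteq> I" "K2 \<subseteq> I"
    and "Y1 \<in> PiM K1 (\<lambda>_. borel) \<rightarrow>\<^sub>M borel" "Y2 \<in> PiM K2 (\<lambda>_. borel) \<rightarrow>\<^sub>M borel"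
  shows "indep_var borel (\<lambda>\<omega>. Y1 (restrict (\<lambda>k. V k \<omega>) K1)) borel (\<lambda>\<omega>. Y2 (restrict (\<lambda>k. V k \<omega>) K2))"
  using indep_var_compose[OF indep_var_restrict[OF assms(1-4)] assms(5,6)] by (simp add: comp_def)

definition pending_window :: "real \<Rightarrow> (real \<times> real) set" where
  "pending_window t = {p. fst p \<le> t \<and> t < fst p + snd p}"

lemma pending_window_borel [measurable]: "pending_window t \<in> sets borel"
proof -
  have "{p :: real \<times> real. fst p \<le> t} \<in> sets borel" "{p :: real \<times> real. t < fst p + snd p} \<in> sets borel"
    by (intro borel_closed closed_Collect_le borel_open open_Collect_less continuous_intros)+
  then show ?thesis
    unfolding pending_window_def by (simp add: Collect_conj_eq)
qed

lemma (in prob_space) emeasure_pending_window_indep: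
  fixes T D :: "'a \<Rightarrow> real"
  assumes "indep_var borel T borel D"
  shows "emeasure M {\<omega> \<in> space M. (T \<omega>, D \<omega>) \<in> pending_window t}
       = (\<integral>\<^sup>+s. indicator {..t} s * emeasure M {\<omega> \<in> space M. t - s < D \<omega>} \<partial>distr M borel T)"
proof -
  have S: "pending_window t \<in> sets (borel \<Otimes>\<^sub>M borel)"
    unfolding borel_prod by simp
  have [measurable]: "T \<in> borel_measurable M" "D \<in> borel_measurable M"
    using indep_var_rv1[OF assms] indep_var_rv2[OF assms] by auto
  interpret D: prob_space "distr M borel D"
    by (rule prob_space_distr) simp
  have "emeasure M {\<omega> \<in> space M. (T \<omega>, D \<omega>) \<in> pending_window t}
      = emeasure (distr M (borel \<Otimes>\<^sub>M borel) (\<lambda>\<omega>. (T \<omega>, D \<omega>))) (pending_window t)"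
    by (subst emeasure_distr[OF _ S]) (auto intro!: arg_cong[where f = "emeasure M"])
  also have "\<dots> = emeasure (distr M borel T \<Otimes>\<^sub>M distr M borel D) (pending_window t)"
    using assms by (simp add: indep_var_distribution_eq)
  also have "\<dots> = (\<integral>\<^sup>+s. emeasure (distr M borel D) (Pair s -` pending_window t) \<partial>distr M borel T)"
    by (rule D.emeasure_pair_measure_alt) (simp add: S)
  also have "\<dots> = (\<integral>\<^sup>+s. indicator {..t} s * emeasure M {\<omega> \<in> space M. t - s < D \<omega>} \<partial>distr M borel T)"
  proof (intro nn_integral_cong)
    fix s
    have "Pair s -` pending_window t = (if s \<le> t then {t - s<..} else {})"
      by (auto simp: pending_window_def)
    then show "emeasure (distr M borel D) (Pair s -` pending_window t)
        = indicator {..t} s * emeasure M {\<omega> \<in> space M. t - s < D \<omega>}"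
      by (auto simp: emeasure_distr vimage_def Int_def conj_commute)
  qed
  finally show ?thesis .
qed

lemma integral_suminf_summable_norm:
  fixes f :: "nat \<Rightarrow> 'a \<Rightarrow> real"
  assumes int: "\<And>i. integrable M (f i)" and sum: "summable (\<lambda>i. \<integral>x. norm (f i x) \<partial>M)"
  shows "(\<integral>x. (\<Sum>i. f i x) \<partial>M) = (\<Sum>i. integral\<^sup>L M (f i))"
proof (rule integral_suminf[OF int _ sum])
  have "(\<integral>\<^sup>+x. (\<Sum>i. ennreal (norm (f i x))) \<partial>M) = (\<Sum>i. \<integral>\<^sup>+x. ennreal (norm (f i x)) \<partial>M)"
    using int by (intro nn_integral_suminf) auto
  also have "\<dots> = (\<Sum>i. ennreal (\<integral>x. norm (f i x) \<partial>M))"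
    using int by (intro suminf_cong nn_integral_eq_integral) auto
  also have "\<dots> \<noteq> \<top>"
    using sum by (rule ennreal_suminf_neq_top) simp
  finally have "AE x in M. (\<Sum>i. ennreal (norm (f i x))) \<noteq> \<infinity>"
    using int by (intro nn_integral_noteq_infinite) auto
  then show "AE x in M. summable (\<lambda>i. norm (f i x))"
    by eventually_elim (auto intro: summable_suminf_not_top)
qed

lemma (in prob_space) expectation_suminf_indep_mult:
  fixes X Y :: "nat \<Rightarrow> 'a \<Rightarrow> real"
  assumes indep: "\<And>i. indep_var borel (X i) borel (Y i)"
    and distr: "\<And>i. distr M borel (X i) = distr M borel (X 0)"
    and int_X: "integrable M (X 0)"
    and int_Y: "\<And>i. integrable M (Y i)" and Y_nonneg: "\<And>i \<omega>. Y i \<omega> \<ge> 0"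
    and sum: "summable (\<lambda>i. expectation (Y i))"
  shows "expectation (\<lambda>\<omega>. \<Sum>i. X i \<omega> * Y i \<omega>) = expectation (X 0) * (\<Sum>i. expectation (Y i))"
proof -
  have X: "X i \<in> borel_measurable M" for i
    using indep_var_rv1[OF indep[of i]] by simp
  have moment: "integrable M (\<lambda>\<omega>. \<phi> (X i \<omega>) * Y i \<omega>) \<and>
      expectation (\<lambda>\<omega>. \<phi> (X i \<omega>) * Y i \<omega>) = expectation (\<lambda>\<omega>. \<phi> (X 0 \<omega>)) * expectation (Y i)"
    if \<phi>: "\<phi> \<in> borel_measurable borel" and int_\<phi>: "integrable M (\<lambda>\<omega>. \<phi> (X 0 \<omega>))"
    for \<phi> :: "real \<Rightarrow> real" and i
  proof -
    have indep_\<phi>: "indep_var borel (\<lambda>\<omega>. \<phi> (X i \<omega>)) borel (Y i)"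
      using indep_var_compose[OF indep[of i] \<phi> measurable_ident] by (simp add: comp_def)
    have "integrable M (\<lambda>\<omega>. \<phi> (X i \<omega>)) = integrable M (\<lambda>\<omega>. \<phi> (X 0 \<omega>))"
      using integrable_distr_eq[OF X \<phi>, of i] integrable_distr_eq[OF X \<phi>, of 0]
      by (simp only: distr[of i])
    moreover have "expectation (\<lambda>\<omega>. \<phi> (X i \<omega>)) = expectation (\<lambda>\<omega>. \<phi> (X 0 \<omega>))"
      using integral_distr[OF X \<phi>, of i] integral_distr[OF X \<phi>, of 0] by (simp only: distr[of i])
    ultimately show ?thesis
      using int_\<phi> int_Y[of i] indep_var_lebesgue_integral[OF indep_\<phi>] indep_var_integrable[OF indep_\<phi>]
      by simp
  qed
  have "expectation (\<lambda>\<omega>. \<Sum>i. X i \<omega> * Y i \<omega>) = (\<Sum>i. expectation (\<lambda>\<omega>. X i \<omega> * Y i \<omega>))"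
  proof (rule integral_suminf_summable_norm)
    show "integrable M (\<lambda>\<omega>. X i \<omega> * Y i \<omega>)" for i
      using moment[of "\<lambda>x. x"] int_X by simp
    have "(\<integral>\<omega>. norm (X i \<omega> * Y i \<omega>) \<partial>M) = expectation (\<lambda>\<omega>. \<bar>X 0 \<omega>\<bar>) * expectation (Y i)" for i
      using moment[of abs i] int_X Y_nonneg by (simp add: abs_mult)
    then show "summable (\<lambda>i. \<integral>\<omega>. norm (X i \<omega> * Y i \<omega>) \<partial>M)"
      using sum by (simp add: summable_mult)
  qed
  also have "\<dots> = (\<Sum>i. expectation (X 0) * expectation (Y i))"
    using moment[of "\<lambda>x. x"] int_X by simp
  also have "\<dots> = expectation (X 0) * (\<Sum>i. expectation (Y i))"
    using sum by (rule suminf_mult)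
  finally show ?thesis .
qed

abbreviation claim_family :: "(nat \<Rightarrow> 'a \<Rightarrow> real) \<Rightarrow> (nat \<Rightarrow> 'a \<Rightarrow> real) \<Rightarrow> (nat \<Rightarrow> 'a \<Rightarrow> real)
    \<Rightarrow> nat \<times> nat \<Rightarrow> 'a \<Rightarrow> real" where
  "claim_family tau X L \<equiv> \<lambda>(j, i). if j = 0 then tau i else if j = 1 then X i else L i"

locale claims_model = prob_space M for M :: "'a measure" +
  fixes tau X L :: "nat \<Rightarrow> 'a \<Rightarrow> real"
  assumes indep_claims: "indep_vars (\<lambda>_. borel) (claim_family tau X L) ({0,1,2} \<times> UNIV)"
begin

lemma claims_measurable [measurable]:
  "tau i \<in> borel_measurable M" "X i \<in> borel_measurable M" "L i \<in> borel_measurable M"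
  using indep_claims[unfolded indep_vars_def]
  by (force dest: bspec[of _ _ "(0, i)"] bspec[of _ _ "(1, i)"] bspec[of _ _ "(2, i)"])+

lemma indep_var_claim_arrival_delay:
  fixes g :: "real \<times> real \<Rightarrow> real"
  assumes [measurable]: "g \<in> borel_measurable borel"
  shows "indep_var borel (X i) borel (\<lambda>\<omega>. g (arrival_time tau i \<omega>, L i \<omega>))"
proof -
  have "indep_var
      borel (\<lambda>\<omega>. (\<lambda>f. f (1, i)) (restrict (\<lambda>k. claim_family tau X L k \<omega>) {(1, i)}))
      borel (\<lambda>\<omega>. (\<lambda>f. g (\<Sum>k\<le>i. f (0, k), f (2, i)))
        (restrict (\<lambda>k. claim_family tau X L k \<omega>) ({0} \<times> {..i} \<union> {(2, i)})))"
    by (rule indep_var_disjoint_blocks[OF indep_claims]) auto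
  then show ?thesis
    by (simp add: arrival_time_def)
qed

lemma indep_var_arrival_delay: "indep_var borel (arrival_time tau i) borel (L i)"
proof -
  have "indep_var
      borel (\<lambda>\<omega>. (\<lambda>f. \<Sum>k\<le>i. f (0, k)) (restrict (\<lambda>k. claim_family tau X L k \<omega>) ({0} \<times> {..i})))
      borel (\<lambda>\<omega>. (\<lambda>f. f (2, i)) (restrict (\<lambda>k. claim_family tau X L k \<omega>) {(2, i)}))"
    by (rule indep_var_disjoint_blocks[OF indep_claims]) auto
  then show ?thesis
    by (simp add: arrival_time_def[abs_def])
qed

definition pending :: "real \<Rightarrow> nat \<Rightarrow> 'a set" where
  "pending t i = {\<omega> \<in> space M. (arrival_time tau i \<omega>, L i \<omega>) \<in> pending_window t}"

lemma emeasure_pending: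
  assumes "\<And>x. x \<ge> 0 \<Longrightarrow> prob {\<omega> \<in> space M. L i \<omega> > x} = S x"
    and [measurable]: "S \<in> borel_measurable borel"
  shows "emeasure M (pending t i)
       = (\<integral>\<^sup>+\<omega>. indicator {..t} (arrival_time tau i \<omega>) * ennreal (S (t - arrival_time tau i \<omega>)) \<partial>M)"
proof -
  have "emeasure M (pending t i)
      = (\<integral>\<^sup>+s. indicator {..t} s * emeasure M {\<omega> \<in> space M. t - s < L i \<omega>}
          \<partial>distr M borel (arrival_time tau i))"
    unfolding pending_def by (rule emeasure_pending_window_indep[OF indep_var_arrival_delay])
  also have "\<dots> = (\<integral>\<^sup>+s. indicator {..t} s * ennreal (S (t - s)) \<partial>distr M borel (arrival_time tau i))"
    using assms by (intro nn_integral_cong) (simp add: emeasure_eq_measure split: split_indicator)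
  also have "\<dots>
      = (\<integral>\<^sup>+\<omega>. indicator {..t} (arrival_time tau i \<omega>) * ennreal (S (t - arrival_time tau i \<omega>)) \<partial>M)"
    by (rule nn_integral_distr) (simp_all add: emeasure_eq_measure)
  finally show ?thesis .
qed

lemma expectation_Zproc:
  assumes "\<And>i. distr M borel (X i) = distr M borel (X 0)" "integrable M (X 0)"
    and "summable (\<lambda>i. prob (pending t i))"
  shows "expectation (Zproc tau X L t) = expectation (X 0) * (\<Sum>i. prob (pending t i))"
proof -
  let ?Y = "\<lambda>i \<omega>. indicator (pending_window t) (arrival_time tau i \<omega>, L i \<omega>) :: real"
  have Y: "expectation (?Y i) = prob (pending t i)" for i
    by (subst Bochner_Integration.integral_cong[where g = "indicator (pending t i)"])
       (auto simp: pending_def split: split_indicator)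
  have "Zproc tau X L t = (\<lambda>\<omega>. \<Sum>i. X i \<omega> * ?Y i \<omega>)"
    by (auto simp: fun_eq_iff Zproc_def pending_window_def intro!: suminf_cong)
  then have "expectation (Zproc tau X L t) = expectation (\<lambda>\<omega>. \<Sum>i. X i \<omega> * ?Y i \<omega>)"
    by simp
  also have "\<dots> = expectation (X 0) * (\<Sum>i. expectation (?Y i))"
  proof (rule expectation_suminf_indep_mult[where X = X and Y = ?Y, OF _ assms(1,2)])
    show "indep_var borel (X i) borel (?Y i)" for i
      by (rule indep_var_claim_arrival_delay) simp
    show "integrable M (?Y i)" for i
      by (rule integrable_const_bound[where B = 1]) auto
  qed (use assms(3) in \<open>simp_all add: Y\<close>)
  finally show ?thesis
    by (simp add: Y)
qed

lemma suminf_emeasure_pending_Pareto: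
  assumes fp: "fractional_poisson M lam \<alpha> tau" "lam \<ge> 0" "\<alpha> > 0"
    and "\<theta> > 0" "t \<ge> 0"
    and Pareto: "\<And>i x. x \<ge> 0 \<Longrightarrow> prob {\<omega> \<in> space M. L i \<omega> > x} = (\<theta> / (\<theta> + x)) powr \<eta>"
  shows "(\<Sum>i. emeasure M (pending t i)) = ennreal (lam / Gamma \<alpha> *
           (\<theta> powr \<eta> * (\<theta> + t) powr (\<alpha> - \<eta>) * incomplete_Beta \<alpha> (1 - \<eta>) (t / (\<theta> + t))))"
proof -
  define h where "h s = indicator {..t} s * ennreal ((\<theta> / (\<theta> + (t - s))) powr \<eta>)" for s
  have [measurable]: "h \<in> borel_measurable borel"
    unfolding h_def by measurable
  have "(\<Sum>i. emeasure M (pending t i)) = (\<Sum>i. \<integral>\<^sup>+\<omega>. h (arrival_time tau i \<omega>) \<partial>M)"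
    using emeasure_pending[OF Pareto] by (simp add: h_def)
  also have "\<dots> = (\<integral>\<^sup>+s. h s \<partial>renewal_measure M tau)"
    by (rule nn_integral_renewal_measure[symmetric]) (simp_all add: sigma_finite_measure_axioms)
  also have "\<dots> = (\<integral>\<^sup>+s. indicator {..t} s * h s \<partial>renewal_measure M tau)"
    by (intro nn_integral_cong) (simp add: h_def split: split_indicator)
  also have "\<dots> = (\<integral>\<^sup>+s. h s \<partial>density (renewal_measure M tau) (indicator {..t}))"
    by (rule nn_integral_density[symmetric]) measurable
  also have "\<dots>
      = (\<integral>\<^sup>+s. h s \<partial>density lborel (\<lambda>s. indicator {0..t} s * ennreal (lam / Gamma \<alpha> * s powr (\<alpha> - 1))))"
    using assms by (simp add: density_renewal_measure_fractional_poisson)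
  also have "\<dots> = (\<integral>\<^sup>+s. indicator {0..t} s * ennreal (lam / Gamma \<alpha> * s powr (\<alpha> - 1)) * h s \<partial>lborel)"
    by (rule nn_integral_density) measurable
  also have "\<dots> = (\<integral>\<^sup>+s. ennreal (lam / Gamma \<alpha>) *
      (indicator {0..t} s * ennreal (s powr (\<alpha> - 1) * (\<theta> / (\<theta> + (t - s))) powr \<eta>)) \<partial>lborel)"
  proof (intro nn_integral_cong)
    fix s
    have "ennreal (lam / Gamma \<alpha> * s powr (\<alpha> - 1)) * ennreal ((\<theta> / (\<theta> + (t - s))) powr \<eta>)
        = ennreal (lam / Gamma \<alpha>) * ennreal (s powr (\<alpha> - 1) * (\<theta> / (\<theta> + (t - s))) powr \<eta>)"
      using assms by (simp add: ennreal_mult'[symmetric] mult.assoc)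
    then show "indicator {0..t} s * ennreal (lam / Gamma \<alpha> * s powr (\<alpha> - 1)) * h s
        = ennreal (lam / Gamma \<alpha>) *
          (indicator {0..t} s * ennreal (s powr (\<alpha> - 1) * (\<theta> / (\<theta> + (t - s))) powr \<eta>))"
      by (simp add: h_def mult_ac split: split_indicator)
  qed
  also have "\<dots> = ennreal (lam / Gamma \<alpha>) *
      ennreal (\<theta> powr \<eta> * (\<theta> + t) powr (\<alpha> - \<eta>) * incomplete_Beta \<alpha> (1 - \<eta>) (t / (\<theta> + t)))"
    using assms by (simp add: nn_integral_cmult nn_integral_powr_Pareto_survival)
  also have "\<dots> = ennreal (lam / Gamma \<alpha> *
      (\<theta> powr \<eta> * (\<theta> + t) powr (\<alpha> - \<eta>) * incomplete_Beta \<alpha> (1 - \<eta>) (t / (\<theta> + t))))"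
    by (rule ennreal_mult'[symmetric]) (use assms in simp)
  finally show ?thesis .
qed

lemma expectation_Zproc_Pareto:
  assumes fp: "fractional_poisson M lam \<alpha> tau" "lam \<ge> 0" "\<alpha> > 0"
    and \<theta>: "\<theta> > 0" and t: "t \<ge> 0"
    and Pareto: "\<And>i x. x \<ge> 0 \<Longrightarrow> prob {\<omega> \<in> space M. L i \<omega> > x} = (\<theta> / (\<theta> + x)) powr \<eta>"
    and "\<And>i. distr M borel (X i) = distr M borel (X 0)" "integrable M (X 0)"
  shows "expectation (Zproc tau X L t) = expectation (X 0) * (lam / Gamma \<alpha> *
           (\<theta> powr \<eta> * (\<theta> + t) powr (\<alpha> - \<eta>) * incomplete_Beta \<alpha> (1 - \<eta>) (t / (\<theta> + t))))"
proof -
  define V where "V = lam / Gamma \<alpha> *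
      (\<theta> powr \<eta> * (\<theta> + t) powr (\<alpha> - \<eta>) * incomplete_Beta \<alpha> (1 - \<eta>) (t / (\<theta> + t)))"
  have "V \<ge> 0"
    unfolding V_def using assms by (intro mult_nonneg_nonneg incomplete_Beta_nonneg) auto
  have "(\<Sum>i. emeasure M (pending t i)) = ennreal V"
    unfolding V_def by (rule suminf_emeasure_pending_Pareto[OF assms(1-6)])
  then have sum: "(\<Sum>i. ennreal (prob (pending t i))) = ennreal V"
    by (simp only: emeasure_eq_measure)
  then have summable: "summable (\<lambda>i. prob (pending t i))"
    by (intro summable_suminf_not_top) simp_all
  have "ennreal (\<Sum>i. prob (pending t i)) = ennreal V"
    using suminf_ennreal2[OF _ summable] sum by simp
  then have "(\<Sum>i. prob (pending t i)) = V"
    using \<open>V \<ge> 0\<close> suminf_nonneg[OF summable] by simp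
  then show ?thesis
    using expectation_Zproc[OF assms(7,8) summable] by (simp add: V_def)
qed

end

theorem proposition5:
  fixes M :: "'a measure" and tau X L :: "nat \<Rightarrow> 'a \<Rightarrow> real"
    and lam alpha theta eta mu1 :: real
  assumes "prob_space M"
    and "lam > 0" and "0 < alpha" and "alpha \<le> 1"
    and "theta > 0" and "eta > 0"
    and "fractional_poisson M lam alpha tau"
    and "prob_space.indep_vars M (\<lambda>_. borel)
           (\<lambda>(j::nat, i). if j = 0 then tau i else if j = 1 then X i else L i) ({0,1,2} \<times> UNIV)"
    and "\<And>i. distr M borel (X i) = distr M borel (X 0)"
    and "integrable M (X 0)" and "mu1 = integral\<^sup>L M (X 0)"
    and "\<And>i x. x \<ge> 0 \<Longrightarrow>
           measure M {\<omega> \<in> space M. L i \<omega> > x} = (theta / (theta + x)) powr eta"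
  shows "(\<forall>t>0. integral\<^sup>L M (Zproc tau X L t) =
            mu1 * lam * theta powr eta / (Gamma alpha * (theta + t) powr (eta - alpha)) *
            (LBINT y=0..t / (theta + t). (1 - y) powr (- eta) * y powr (alpha - 1)))
       \<and> (eta < 1 \<longrightarrow> (\<lambda>t. integral\<^sup>L M (Zproc tau X L t)) \<sim>[at_top]
            (\<lambda>t. mu1 * lam * theta powr eta * Gamma (1 - eta) / Gamma (alpha + 1 - eta)
                   * t powr (alpha - eta)))
       \<and> (eta = 1 \<longrightarrow> (\<lambda>t. integral\<^sup>L M (Zproc tau X L t)) \<sim>[at_top]
            (\<lambda>t. mu1 * lam * theta / Gamma alpha * t powr (alpha - 1) * ln t))
       \<and> (eta > 1 \<longrightarrow> (\<lambda>t. integral\<^sup>L M (Zproc tau X L t)) \<sim>[at_top]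
            (\<lambda>t. mu1 * lam * theta / ((eta - 1) * Gamma alpha) * t powr (alpha - 1)))"
proof -
  interpret claims_model M tau X L
    using assms(1,8) by (intro claims_model.intro claims_model_axioms.intro)
  define F where "F = (\<lambda>t. mu1 * lam * theta powr eta / Gamma alpha *
    ((theta + t) powr (alpha - eta) * incomplete_Beta alpha (1 - eta) (t / (theta + t))))"
  have EZ: "integral\<^sup>L M (Zproc tau X L t) = F t" if "t > 0" for t
    using expectation_Zproc_Pareto[OF assms(7) _ assms(3,5) _ assms(12,9,10), of t] assms(2,11) that
    by (simp add: F_def)
  have u: "0 \<le> t / (theta + t)" "t / (theta + t) < 1" if "t > 0" for t
    using that assms(5) by auto
  have "integral\<^sup>L M (Zproc tau X L t) =
      mu1 * lam * theta powr eta / (Gamma alpha * (theta + t) powr (eta - alpha)) *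
      (LBINT y=0..t / (theta + t). (1 - y) powr (- eta) * y powr (alpha - 1))" if "t > 0" for t
    using EZ[OF that] interval_integral_Beta_integrand[OF assms(3) u[OF that], of "1 - eta"]
    by (simp add: F_def mult.commute powr_diff divide_simps)
  moreover have "eventually (\<lambda>t. F t = integral\<^sup>L M (Zproc tau X L t)) at_top"
    using eventually_gt_at_top[of 0] by eventually_elim (simp add: EZ)
  ultimately show ?thesis
    using asymp_equiv_fractional_Pareto[OF assms(3,5), where c = "mu1 * lam" and \<eta> = eta,
        folded F_def]
    by (auto elim!: asymp_equiv_transfer)
qed

end
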